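(* Let $n\geq 3$ and $\ell\geq 2$, and consider the generalized $n$-cycle scenario whose measurements each have outcome set $O$ with $|O|=\ell$. A nondisturbing behavior for it is logically contextual if and only if there exist an index $\mu\in\{1,\dots,n\}$, a pair $(a,b)\in O^2$ with $\bar p_\mu(a,b)=1$, and, for each $\nu=1,\dots,n-2$, an enumeration $(\alpha_\nu^1,\dots,\alpha_\nu^\ell)$ of $O$ with pairwise distinct entries and an integer $0\leq m_\nu\leq\ell$, such that all of the following equal $0$: $\bar p_{\mu+1}(b,\alpha_1^i)$ for $1\le i\le m_1$; $\bar p_{\mu+\nu+1}(\alpha_\nu^i,\alpha_{\nu+1}^j)$ for $1\le\nu\le n-3$, $m_\nu< i\le\ell$, $1\le j\le m_{\nu+1}$; $\bar p_{\mu+n-1}(\alpha_{n-2}^i,a)$ for $m_{n-2}<i\le\ell$. (Indices of $\bar p$ are taken modulo $n$.)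
   Context: The generalized $n$-cycle scenario has measurements $M_1,\dots,M_n$, each with finite outcome set $O$, and contexts $\{M_i,M_{i+1}\}$, indices mod $n$. A behavior is a family of probability distributions $p_i$ on $O^2$, $p_i(x,y)$ being the probability that $M_i=x$ and $M_{i+1}=y$; it is nondisturbing if for all $i$ and $x$, $\sum_y p_i(y,x)=\sum_y p_{i+1}(x,y)$. Set $\bar p_i(x,y)=1$ if $p_i(x,y)>0$ and $0$ otherwise. The behavior is logically noncontextual if there exists $\bar p:O^n\to\{0,1\}$ with $\max\{\bar p(t):t_i=x,\ t_{i+1}=y\}=\bar p_i(x,y)$ for all $i,x,y$; otherwise logically contextual. *)

theory Defs
  imports Complex_Main "HOL-Library.FuncSet"
begin

text \<open>Measurements are indexed 0..n-1 (the paper uses 1..n);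
  all context indices are taken modulo n. Outcomes form a finite type 'o with CARD('o) = l.
  p i x y = probability that M_i = x and M_{i+1} = y.\<close>

definition behavior :: "nat \<Rightarrow> (nat \<Rightarrow> 'o::finite \<Rightarrow> 'o \<Rightarrow> real) \<Rightarrow> bool" where
  "behavior n p \<longleftrightarrow> (\<forall>i<n. (\<forall>x y. p i x y \<ge> 0) \<and> (\<Sum>x\<in>UNIV. \<Sum>y\<in>UNIV. p i x y) = 1)"

definition nondisturbing :: "nat \<Rightarrow> (nat \<Rightarrow> 'o::finite \<Rightarrow> 'o \<Rightarrow> real) \<Rightarrow> bool" where
  "nondisturbing n p \<longleftrightarrow>
     (\<forall>i<n. \<forall>x. (\<Sum>y\<in>UNIV. p i y x) = (\<Sum>y\<in>UNIV. p (Suc i mod n) x y))"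

definition pbar :: "nat \<Rightarrow> (nat \<Rightarrow> 'o::finite \<Rightarrow> 'o \<Rightarrow> real) \<Rightarrow> nat \<Rightarrow> 'o \<Rightarrow> 'o \<Rightarrow> nat" where
  "pbar n p i x y = (if p (i mod n) x y > 0 then 1 else 0)"

text \<open>Global assignments t \<in> O^n are extensional functions on {..<n}.\<close>
definition logically_noncontextual :: "nat \<Rightarrow> (nat \<Rightarrow> 'o::finite \<Rightarrow> 'o \<Rightarrow> real) \<Rightarrow> bool" where
  "logically_noncontextual n p \<longleftrightarrow>
     (\<exists>q :: (nat \<Rightarrow> 'o) \<Rightarrow> nat. (\<forall>t. q t \<in> {0, 1}) \<and>
        (\<forall>i<n. \<forall>x y. Max {q t | t. t \<in> PiE {..<n} (\<lambda>_. UNIV) \<and> t i = x \<and> t (Suc i mod n) = y}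
                        = pbar n p i x y))"

definition logically_contextual :: "nat \<Rightarrow> (nat \<Rightarrow> 'o::finite \<Rightarrow> 'o \<Rightarrow> real) \<Rightarrow> bool" where
  "logically_contextual n p \<longleftrightarrow> \<not> logically_noncontextual n p"

end

theory Submission
  imports Defs
begin

text \<open>
  The behavior is logically noncontextual iff every possible local event \<open>(a, b)\<close> of a
  context \<open>(\<mu>, \<mu> + 1)\<close> extends to a global assignment all of whose local events are possible.
  Cutting the cycle open at \<open>\<mu>\<close>, such an extension is a walk \<open>b = s 0, s 1, \<dots>, s (n - 1) = a\<close>
  whose \<open>j\<close>-th step is possible in the context \<open>(\<mu> + 1 + j, \<mu> + 2 + j)\<close>; so contextuality
  means that \<open>a\<close> is unreachable from \<open>b\<close> in this layered graph. The enumerations of the theorem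
  certify exactly this: if \<open>\<alpha> \<nu>\<close> lists the \<open>m \<nu>\<close> unreachable outcomes of layer \<open>\<nu>\<close> first, no
  possible step enters them, nor reaches \<open>a\<close>; conversely, for any such enumerations the tails
  \<open>\<alpha> \<nu> ` {m \<nu><..l}\<close> form an invariant that contains every reachable outcome.
\<close>

definition consistent_assignment ::
  "nat \<Rightarrow> (nat \<Rightarrow> 'o::finite \<Rightarrow> 'o \<Rightarrow> real) \<Rightarrow> (nat \<Rightarrow> 'o) \<Rightarrow> bool"
where
  "consistent_assignment n p t \<longleftrightarrow> (\<forall>k<n. pbar n p k (t k) (t (Suc k mod n)) = 1)"

lemma consistent_assignmentD:
  "consistent_assignment n p t \<Longrightarrow> k < n \<Longrightarrow> pbar n p k (t k) (t (Suc k mod n)) = 1"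
  by (simp add: consistent_assignment_def)

lemma pbar_neq_1_iff: "pbar n p i x y \<noteq> 1 \<longleftrightarrow> pbar n p i x y = 0"
  by (simp add: pbar_def)

lemma pbar_mod [simp]: "pbar n p (i mod n) = pbar n p i"
  by (simp add: pbar_def fun_eq_iff)

lemma Max_binary_image:
  fixes q :: "'a \<Rightarrow> nat"
  assumes "\<forall>t. q t \<in> {0, 1}" and "\<exists>t. P t"
  shows "Max {q t | t. P t} = (if \<exists>t. P t \<and> q t = 1 then 1 else 0)"
proof -
  have sub: "{q t | t. P t} \<subseteq> {0, 1}" using assms(1) by force
  show ?thesis
  proof (intro Max_eqI)
    show "finite {q t | t. P t}" using sub finite_subset by blast
    show "(if \<exists>t. P t \<and> q t = 1 then 1 else 0) \<in> {q t | t. P t}"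
    proof (cases "\<exists>t. P t \<and> q t = 1")
      case True
      then show ?thesis by force
    next
      case False
      then show ?thesis using assms by force
    qed
    show "x \<le> (if \<exists>t. P t \<and> q t = 1 then 1 else 0)" if x: "x \<in> {q t | t. P t}" for x
    proof -
      obtain t where "x = q t" "P t" using x by blast
      then show ?thesis using assms(1)[rule_format, of t] by (cases "q t = 1") auto
    qed
  qed
qed

lemma ex_assignment_with_event:
  assumes "n \<ge> 2" and "i < n"
  shows "\<exists>t. t \<in> PiE {..<n} (\<lambda>_. UNIV) \<and> t i = x \<and> t (Suc i mod n) = y"
proof -
  have "Suc i mod n \<noteq> i" "Suc i mod n < n"
    using assms by (auto simp: mod_Suc)
  then show ?thesis
    by (intro exI[of _ "restrict (\<lambda>j. if j = i then x else y) {..<n}"]) (simp add: assms(2))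
qed

lemma Max_event_binary:
  fixes q :: "(nat \<Rightarrow> 'a) \<Rightarrow> nat"
  assumes "n \<ge> 2" and "i < n" and "\<forall>t. q t \<in> {0, 1}"
  shows "Max {q t | t. t \<in> PiE {..<n} (\<lambda>_. UNIV) \<and> t i = x \<and> t (Suc i mod n) = y} =
    (if \<exists>t. t \<in> PiE {..<n} (\<lambda>_. UNIV) \<and> t i = x \<and> t (Suc i mod n) = y \<and> q t = 1 then 1 else 0)"
  using Max_binary_image[OF assms(3) ex_assignment_with_event[OF assms(1,2), of x y]] by (simp add: conj_assoc)

lemma events_extend_if_noncontextual:
  fixes p :: "nat \<Rightarrow> 'o::finite \<Rightarrow> 'o \<Rightarrow> real"
  assumes "n \<ge> 2" and "logically_noncontextual n p" and "i < n" and "pbar n p i x y = 1"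
  shows "\<exists>t \<in> PiE {..<n} (\<lambda>_. UNIV). t i = x \<and> t (Suc i mod n) = y \<and> consistent_assignment n p t"
proof -
  obtain q :: "(nat \<Rightarrow> 'o) \<Rightarrow> nat" where q01: "\<forall>t. q t \<in> {0, 1}" and
    q_max: "\<forall>i<n. \<forall>x y. Max {q t | t. t \<in> PiE {..<n} (\<lambda>_. UNIV) \<and> t i = x \<and> t (Suc i mod n) = y}
      = pbar n p i x y"
    using assms(2) unfolding logically_noncontextual_def by blast
  have q_iff: "(\<exists>t. t \<in> PiE {..<n} (\<lambda>_. UNIV) \<and> t i = x \<and> t (Suc i mod n) = y \<and> q t = 1)
      \<longleftrightarrow> pbar n p i x y = 1" if "i < n" for i x y
  proof -
    have "pbar n p i x y = (if \<exists>t. t \<in> PiE {..<n} (\<lambda>_. UNIV) \<and> t i = x \<and> t (Suc i mod n) = y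
        \<and> q t = 1 then 1 else 0)"
      using q_max Max_event_binary[OF assms(1) that q01, of x y] that by simp
    then show ?thesis by simp
  qed
  have "consistent_assignment n p t" if "t \<in> PiE {..<n} (\<lambda>_. UNIV)" "q t = 1" for t
    unfolding consistent_assignment_def using q_iff that by blast
  then show ?thesis
    using q_iff[OF assms(3)] assms(4) by blast
qed

lemma noncontextual_if_events_extend:
  fixes p :: "nat \<Rightarrow> 'o::finite \<Rightarrow> 'o \<Rightarrow> real"
  assumes "n \<ge> 2" and extend: "\<And>i x y. i < n \<Longrightarrow> pbar n p i x y = 1 \<Longrightarrow>
    \<exists>t \<in> PiE {..<n} (\<lambda>_. UNIV). t i = x \<and> t (Suc i mod n) = y \<and> consistent_assignment n p t"
  shows "logically_noncontextual n p"
proof -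
  define q :: "(nat \<Rightarrow> 'o) \<Rightarrow> nat" where
    "q t = (if t \<in> PiE {..<n} (\<lambda>_. UNIV) \<and> consistent_assignment n p t then 1 else 0)" for t
  have q01: "\<forall>t. q t \<in> {0, 1}"
    by (simp add: q_def)
  have "(\<exists>t. t \<in> PiE {..<n} (\<lambda>_. UNIV) \<and> t i = x \<and> t (Suc i mod n) = y \<and> q t = 1)
      \<longleftrightarrow> pbar n p i x y = 1" if i: "i < n" for i x y
  proof
    assume "\<exists>t. t \<in> PiE {..<n} (\<lambda>_. UNIV) \<and> t i = x \<and> t (Suc i mod n) = y \<and> q t = 1"
    then obtain t where t: "t i = x" "t (Suc i mod n) = y" "q t = 1"
      by blast
    then have "consistent_assignment n p t"
      by (simp add: q_def split: if_splits)
    from consistent_assignmentD[OF this i] show "pbar n p i x y = 1"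
      unfolding t(1,2) .
  next
    assume "pbar n p i x y = 1"
    with extend[OF i] obtain t where t: "t \<in> PiE {..<n} (\<lambda>_. UNIV)" "t i = x" "t (Suc i mod n) = y"
      "consistent_assignment n p t"
      by blast
    then have "q t = 1"
      unfolding q_def by (simp only: if_True conj_absorb)
    with t show "\<exists>t. t \<in> PiE {..<n} (\<lambda>_. UNIV) \<and> t i = x \<and> t (Suc i mod n) = y \<and> q t = 1"
      by blast
  qed
  then have "Max {q t | t. t \<in> PiE {..<n} (\<lambda>_. UNIV) \<and> t i = x \<and> t (Suc i mod n) = y} = pbar n p i x y"
    if "i < n" for i x y
    unfolding Max_event_binary[OF assms(1) that q01] using that by (simp add: pbar_def)
  then show "logically_noncontextual n p"
    unfolding logically_noncontextual_def using q01 by blast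
qed

primrec reach :: "(nat \<Rightarrow> 'a \<Rightarrow> 'a \<Rightarrow> bool) \<Rightarrow> 'a \<Rightarrow> nat \<Rightarrow> 'a set" where
  "reach E b 0 = {b}"
| "reach E b (Suc k) = {y. \<exists>x \<in> reach E b k. E k x y}"

lemma reach_iff_walk:
  "y \<in> reach E b k \<longleftrightarrow> (\<exists>s. s 0 = b \<and> s k = y \<and> (\<forall>j<k. E j (s j) (s (Suc j))))"
proof (induction k arbitrary: y)
  case 0
  show ?case by auto
next
  case (Suc k)
  show ?case
  proof
    assume "y \<in> reach E b (Suc k)"
    then obtain s where "E k (s k) y" "s 0 = b" "\<forall>j<k. E j (s j) (s (Suc j))"
      using Suc.IH by auto
    then show "\<exists>s. s 0 = b \<and> s (Suc k) = y \<and> (\<forall>j<Suc k. E j (s j) (s (Suc j)))"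
      by (intro exI[of _ "s(Suc k := y)"]) (auto simp: less_Suc_eq)
  next
    assume "\<exists>s. s 0 = b \<and> s (Suc k) = y \<and> (\<forall>j<Suc k. E j (s j) (s (Suc j)))"
    then obtain s where s: "s 0 = b" "s (Suc k) = y" "\<forall>j<Suc k. E j (s j) (s (Suc j))"
      by blast
    then have "s k \<in> reach E b k" using Suc.IH by auto
    then show "y \<in> reach E b (Suc k)" using s by auto
  qed
qed

lemma reach_SucI: "x \<in> reach E b k \<Longrightarrow> E k x y \<Longrightarrow> y \<in> reach E b (Suc k)"
  by auto

lemma reach_subset_invariant:
  assumes "b \<in> S 0" and "\<And>k x y. k < K \<Longrightarrow> x \<in> S k \<Longrightarrow> E k x y \<Longrightarrow> y \<in> S (Suc k)"
  shows "k \<le> K \<Longrightarrow> reach E b k \<subseteq> S k"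
  by (induction k) (use assms in auto)

lemma mod_rotate_back:
  fixes n c x :: nat
  assumes "c \<le> n"
  shows "((x + c) mod n + (n - c)) mod n = x mod n"
proof -
  have "((x + c) mod n + (n - c)) mod n = (x + c + (n - c)) mod n"
    by (rule mod_add_left_eq)
  also have "x + c + (n - c) = x + n"
    using assms by simp
  finally show ?thesis by simp
qed

lemma reach_if_event_extends:
  fixes p :: "nat \<Rightarrow> 'o::finite \<Rightarrow> 'o \<Rightarrow> real"
  assumes "\<mu> < n" and "t \<mu> = a" and "t (Suc \<mu> mod n) = b" and "consistent_assignment n p t"
  shows "a \<in> reach (\<lambda>j x y. pbar n p (\<mu> + 1 + j) x y = 1) b (n - 1)"
proof -
  let ?s = "\<lambda>j. t ((j + Suc \<mu>) mod n)"
  have "pbar n p (\<mu> + 1 + j) (?s j) (?s (Suc j)) = 1" for j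
    using consistent_assignmentD[OF assms(4), of "(j + Suc \<mu>) mod n"] assms(1)
    by (simp add: mod_Suc_eq ac_simps)
  moreover have "?s 0 = b" and "?s (n - 1) = a"
    using assms(1-3) by simp_all
  ultimately show ?thesis
    unfolding reach_iff_walk by (intro exI[of _ ?s]) simp
qed

lemma event_extends_if_reach:
  fixes p :: "nat \<Rightarrow> 'o::finite \<Rightarrow> 'o \<Rightarrow> real"
  assumes "\<mu> < n" and "pbar n p \<mu> a b = 1"
    and "a \<in> reach (\<lambda>j x y. pbar n p (\<mu> + 1 + j) x y = 1) b (n - 1)"
  shows "\<exists>t \<in> PiE {..<n} (\<lambda>_. UNIV). t \<mu> = a \<and> t (Suc \<mu> mod n) = b \<and> consistent_assignment n p t"
proof -
  obtain s where s: "s 0 = b" "s (n - 1) = a" "\<forall>j<n - 1. pbar n p (\<mu> + 1 + j) (s j) (s (Suc j)) = 1"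
    using assms(3) unfolding reach_iff_walk by blast
  define t where "t = restrict (\<lambda>k. s ((k + (n - Suc \<mu>)) mod n)) {..<n}"
  have t_rotate: "t ((j + Suc \<mu>) mod n) = s (j mod n)" for j
    using assms(1) mod_rotate_back[of "Suc \<mu>" n j] by (simp add: t_def)
  have edge: "pbar n p ((j + Suc \<mu>) mod n) (s j) (s (Suc j mod n)) = 1" if "j < n" for j
  proof (cases "j < n - 1")
    case True
    then show ?thesis
      using s(3)[rule_format, OF True] by (simp add: ac_simps)
  next
    case False
    then have "j = n - 1"
      using that by simp
    moreover have "(n - 1 + Suc \<mu>) mod n = \<mu>"
      using assms(1) by simp
    ultimately show ?thesis
      using s(1,2) assms(2) that by simp
  qed
  have "consistent_assignment n p t"
    unfolding consistent_assignment_def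
  proof (intro allI impI)
    fix k
    assume "k < n"
    define j where "j = (k + (n - Suc \<mu>)) mod n"
    have "k = (j + Suc \<mu>) mod n" and "j < n"
      using \<open>k < n\<close> mod_rotate_back[of "n - Suc \<mu>" n k] assms(1) by (simp_all add: j_def)
    moreover have "Suc ((j + Suc \<mu>) mod n) mod n = (Suc j + Suc \<mu>) mod n"
      by (simp add: mod_Suc_eq)
    ultimately show "pbar n p k (t k) (t (Suc k mod n)) = 1"
      using edge[of j] t_rotate[of j] t_rotate[of "Suc j"] by simp
  qed
  moreover have "t \<mu> = a" and "t (Suc \<mu> mod n) = b"
    using t_rotate[of "n - 1"] t_rotate[of 0] assms(1) s(1,2) by simp_all
  ultimately show ?thesis
    unfolding t_def by (intro bexI[of _ "restrict (\<lambda>k. s ((k + (n - Suc \<mu>)) mod n)) {..<n}"]) auto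
qed

lemma noncontextual_iff_reach:
  fixes p :: "nat \<Rightarrow> 'o::finite \<Rightarrow> 'o \<Rightarrow> real"
  assumes "n \<ge> 2"
  shows "logically_noncontextual n p \<longleftrightarrow>
    (\<forall>\<mu><n. \<forall>a b. pbar n p \<mu> a b = 1 \<longrightarrow> a \<in> reach (\<lambda>j x y. pbar n p (\<mu> + 1 + j) x y = 1) b (n - 1))"
proof
  assume noncontextual: "logically_noncontextual n p"
  show "\<forall>\<mu><n. \<forall>a b. pbar n p \<mu> a b = 1 \<longrightarrow> a \<in> reach (\<lambda>j x y. pbar n p (\<mu> + 1 + j) x y = 1) b (n - 1)"
  proof (intro allI impI)
    fix \<mu> a b
    assume event: "\<mu> < n" "pbar n p \<mu> a b = 1"
    from events_extend_if_noncontextual[OF assms noncontextual event] obtain t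
      where "t \<mu> = a" "t (Suc \<mu> mod n) = b" "consistent_assignment n p t"
      by blast
    then show "a \<in> reach (\<lambda>j x y. pbar n p (\<mu> + 1 + j) x y = 1) b (n - 1)"
      using event(1) by (rule reach_if_event_extends[rotated])
  qed
next
  assume reachable: "\<forall>\<mu><n. \<forall>a b. pbar n p \<mu> a b = 1 \<longrightarrow> a \<in> reach (\<lambda>j x y. pbar n p (\<mu> + 1 + j) x y = 1) b (n - 1)"
  show "logically_noncontextual n p"
  proof (rule noncontextual_if_events_extend[OF assms])
    fix i x y
    assume event: "i < n" "pbar n p i x y = 1"
    with reachable show "\<exists>t \<in> PiE {..<n} (\<lambda>_. UNIV). t i = x \<and> t (Suc i mod n) = y \<and> consistent_assignment n p t"
      by (intro event_extends_if_reach) auto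
  qed
qed

lemma enumeration_listing_first:
  fixes A :: "'a::finite set"
  assumes "card (UNIV :: 'a set) = l"
  obtains f where "bij_betw f {1..l} UNIV" and "\<And>i. i \<in> {1..l} \<Longrightarrow> f i \<in> A \<longleftrightarrow> i \<le> card A"
proof -
  have card_le: "card A \<le> l"
    using assms card_mono[of UNIV A] by simp
  obtain g where g: "bij_betw g {1..card A} A"
    using finite_same_card_bij[of "{1..card A}" A] by auto
  have "card (- A) = l - card A"
    using assms card_Diff_subset[of A UNIV] by (simp add: Compl_eq_Diff_UNIV)
  then obtain h where h: "bij_betw h {card A<..l} (- A)"
    using finite_same_card_bij[of "{card A<..l}" "- A"] by auto
  define f where "f i = (if i \<in> {1..card A} then g i else h i)" for i
  have "bij_betw f ({1..card A} \<union> {card A<..l}) (A \<union> - A)"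
    unfolding f_def by (rule bij_betw_disjoint_Un[OF g h]) auto
  moreover have "{1..card A} \<union> {card A<..l} = {1..l}"
    using card_le by auto
  ultimately have "bij_betw f {1..l} UNIV"
    by simp
  moreover have "f i \<in> A \<longleftrightarrow> i \<le> card A" if "i \<in> {1..l}" for i
    using bij_betw_apply[OF g, of i] bij_betw_apply[OF h, of i] that by (auto simp: f_def)
  ultimately show thesis
    using that by blast
qed

definition unreachability_certificate ::
  "(nat \<Rightarrow> 'a \<Rightarrow> 'a \<Rightarrow> bool) \<Rightarrow> nat \<Rightarrow> nat \<Rightarrow> 'a \<Rightarrow> 'a \<Rightarrow>
    (nat \<Rightarrow> nat \<Rightarrow> 'a) \<Rightarrow> (nat \<Rightarrow> nat) \<Rightarrow> bool"
where
  "unreachability_certificate E l N b a \<alpha> m \<longleftrightarrow>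
     (\<forall>\<nu>\<in>{1..N}. bij_betw (\<alpha> \<nu>) {1..l} UNIV \<and> m \<nu> \<le> l) \<and>
     (\<forall>i\<in>{1..m 1}. \<not> E 0 b (\<alpha> 1 i)) \<and>
     (\<forall>\<nu>\<in>{1..N - 1}. \<forall>i\<in>{m \<nu><..l}. \<forall>j\<in>{1..m (\<nu> + 1)}. \<not> E \<nu> (\<alpha> \<nu> i) (\<alpha> (\<nu> + 1) j)) \<and>
     (\<forall>i\<in>{m N<..l}. \<not> E N (\<alpha> N i) a)"

lemma certificate_imp_not_reach:
  assumes "unreachability_certificate E l N b a \<alpha> m" and "N \<ge> 1"
  shows "a \<notin> reach E b (Suc N)"
proof -
  note cert = assms(1)[unfolded unreachability_certificate_def]
  define S where "S \<nu> = (if \<nu> = 0 then {b} else \<alpha> \<nu> ` {m \<nu><..l})" for \<nu>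
  have "y \<in> S (Suc k)" if "k < N" "x \<in> S k" "E k x y" for k x y
  proof -
    have "Suc k \<in> {1..N}"
      using that(1) by simp
    then obtain j where j: "j \<in> {1..l}" "y = \<alpha> (Suc k) j"
      using cert by (metis UNIV_I bij_betw_iff_bijections)
    have "\<not> j \<le> m (Suc k)"
    proof
      assume "j \<le> m (Suc k)"
      then have "j \<in> {1..m (Suc k)}"
        using j(1) by simp
      then show False
        using cert that j(2) by (cases "k = 0") (auto simp: S_def)
    qed
    then show ?thesis
      using j by (simp add: S_def)
  qed
  then have "reach E b N \<subseteq> S N"
    by (intro reach_subset_invariant[of b S N E]) (auto simp: S_def)
  then show ?thesis
    using cert assms(2) by (auto simp: S_def)
qed

lemma not_reach_imp_certificate:
  fixes E :: "nat \<Rightarrow> 'a::finite \<Rightarrow> 'a \<Rightarrow> bool"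
  assumes "card (UNIV :: 'a set) = l" and "a \<notin> reach E b (Suc N)"
  shows "\<exists>\<alpha> m. unreachability_certificate E l N b a \<alpha> m"
proof -
  define m where "m \<nu> = card (- reach E b \<nu>)" for \<nu>
  have "\<forall>\<nu>. \<exists>f. bij_betw f {1..l} UNIV \<and> (\<forall>i\<in>{1..l}. f i \<notin> reach E b \<nu> \<longleftrightarrow> i \<le> m \<nu>)"
  proof
    fix \<nu>
    obtain f where "bij_betw f {1..l} UNIV" "\<And>i. i \<in> {1..l} \<Longrightarrow> f i \<in> - reach E b \<nu> \<longleftrightarrow> i \<le> m \<nu>"
      using enumeration_listing_first[OF assms(1), of "- reach E b \<nu>"] unfolding m_def by blast
    then show "\<exists>f. bij_betw f {1..l} UNIV \<and> (\<forall>i\<in>{1..l}. f i \<notin> reach E b \<nu> \<longleftrightarrow> i \<le> m \<nu>)"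
      by (metis ComplI Compl_iff)
  qed
  from choice[OF this] obtain \<alpha> where
    "\<forall>\<nu>. bij_betw (\<alpha> \<nu>) {1..l} UNIV \<and> (\<forall>i\<in>{1..l}. \<alpha> \<nu> i \<notin> reach E b \<nu> \<longleftrightarrow> i \<le> m \<nu>)" ..
  then have \<alpha>: "\<And>\<nu>. bij_betw (\<alpha> \<nu>) {1..l} UNIV"
    and unreached: "\<And>\<nu> i. i \<in> {1..l} \<Longrightarrow> \<alpha> \<nu> i \<notin> reach E b \<nu> \<longleftrightarrow> i \<le> m \<nu>"
    by auto
  have m_le: "m \<nu> \<le> l" for \<nu>
    using assms(1) card_mono[of UNIV "- reach E b \<nu>"] by (simp add: m_def)
  have reached: "\<alpha> \<nu> i \<in> reach E b \<nu>" if "i \<in> {m \<nu><..l}" for \<nu> i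
    using unreached[of i \<nu>] that by auto
  have not_reached: "\<alpha> \<nu> i \<notin> reach E b \<nu>" if "i \<in> {1..m \<nu>}" for \<nu> i
    using unreached[of i \<nu>] m_le[of \<nu>] that by auto
  have "unreachability_certificate E l N b a \<alpha> m"
    unfolding unreachability_certificate_def
  proof (intro conjI ballI)
    show "\<not> E 0 b (\<alpha> 1 i)" if "i \<in> {1..m 1}" for i
      using not_reached[OF that] reach_SucI[of b E b 0] by auto
    show "\<not> E \<nu> (\<alpha> \<nu> i) (\<alpha> (\<nu> + 1) j)" if "i \<in> {m \<nu><..l}" "j \<in> {1..m (\<nu> + 1)}" for \<nu> i j
      using reached[OF that(1)] not_reached[OF that(2)] reach_SucI by fastforce
    show "\<not> E N (\<alpha> N i) a" if "i \<in> {m N<..l}" for i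
      using reached[OF that] assms(2) reach_SucI by fastforce
  qed (use \<alpha> m_le in auto)
  then show ?thesis by blast
qed

lemma not_reach_iff_certificate:
  fixes E :: "nat \<Rightarrow> 'a::finite \<Rightarrow> 'a \<Rightarrow> bool"
  assumes "card (UNIV :: 'a set) = l" and "N \<ge> 1"
  shows "a \<notin> reach E b (Suc N) \<longleftrightarrow> (\<exists>\<alpha> m. unreachability_certificate E l N b a \<alpha> m)"
proof
  assume "\<exists>\<alpha> m. unreachability_certificate E l N b a \<alpha> m"
  then obtain \<alpha> m where "unreachability_certificate E l N b a \<alpha> m"
    by blast
  then show "a \<notin> reach E b (Suc N)"
    using assms(2) by (rule certificate_imp_not_reach)
qed (rule not_reach_imp_certificate[OF assms(1)])

theorem theorem4:
  fixes n l :: nat and p :: "nat \<Rightarrow> 'o::finite \<Rightarrow> 'o \<Rightarrow> real"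
  assumes "n \<ge> 3" and "l \<ge> 2" and "card (UNIV :: 'o set) = l"
    and "behavior n p" and "nondisturbing n p"
  shows "logically_contextual n p \<longleftrightarrow>
    (\<exists>\<mu> a b (\<alpha> :: nat \<Rightarrow> nat \<Rightarrow> 'o) (m :: nat \<Rightarrow> nat).
       \<mu> < n \<and> pbar n p \<mu> a b = 1 \<and>
       (\<forall>\<nu>\<in>{1..n-2}. bij_betw (\<alpha> \<nu>) {1..l} UNIV \<and> m \<nu> \<le> l) \<and>
       (\<forall>i\<in>{1..m 1}. pbar n p (\<mu> + 1) b (\<alpha> 1 i) = 0) \<and>
       (\<forall>\<nu>\<in>{1..n-3}. \<forall>i\<in>{m \<nu><..l}. \<forall>j\<in>{1..m (\<nu>+1)}.
           pbar n p (\<mu> + \<nu> + 1) (\<alpha> \<nu> i) (\<alpha> (\<nu>+1) j) = 0) \<and>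
       (\<forall>i\<in>{m (n-2)<..l}. pbar n p (\<mu> + n - 1) (\<alpha> (n-2) i) a = 0))"
proof -
  let ?E = "\<lambda>\<mu> j x y. pbar n p (\<mu> + 1 + j) x y = 1"
  have n2: "n \<ge> 2"
    using assms(1) by simp
  have "logically_contextual n p \<longleftrightarrow>
      (\<exists>\<mu> a b. \<mu> < n \<and> pbar n p \<mu> a b = 1 \<and> a \<notin> reach (?E \<mu>) b (n - 1))"
    unfolding logically_contextual_def noncontextual_iff_reach[OF n2] by blast
  also have "\<dots> \<longleftrightarrow> (\<exists>\<mu> a b. \<mu> < n \<and> pbar n p \<mu> a b = 1 \<and>
      (\<exists>\<alpha> m. unreachability_certificate (?E \<mu>) l (n - 2) b a \<alpha> m))"
  proof -
    have "n - 1 = Suc (n - 2)" and N: "n - 2 \<ge> 1"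
      using assms(1) by auto
    then show ?thesis
      by (simp only: not_reach_iff_certificate[OF assms(3) N])
  qed
  finally have "logically_contextual n p \<longleftrightarrow> (\<exists>\<mu> a b. \<mu> < n \<and> pbar n p \<mu> a b = 1 \<and>
      (\<exists>\<alpha> m. unreachability_certificate (?E \<mu>) l (n - 2) b a \<alpha> m))" .
  moreover have "n - 2 - 1 = n - 3" and "\<And>\<mu>. \<mu> + 1 + (n - 2) = \<mu> + n - 1"
    using assms(1) by auto
  ultimately show ?thesis
    unfolding unreachability_certificate_def pbar_neq_1_iff by (simp add: ac_simps)
qed

end
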